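(* Over any alphabet with at least $4$ letters, for every odd integer $\ell\ge3$ there exists a palindrome of length $\ell$ whose critical exponent is exactly $\tfrac32$.
   Context: A word $x=x[1..n]$ has period $q$ if $x[i]=x[i+q]$ for $1\le i\le n-q$. For integers $p>q\ge1$, $x$ is a $(p/q)$-power if it has length $p$ and period $q$. The exponent $\exp(w)$ of a finite nonempty word $w$ is the largest rational $p/q$ such that $w$ is a $(p/q)$-power. The critical exponent of $w$ is the maximum of $\exp(w')$ over all nonempty factors $w'$ of $w$. A palindrome is a word equal to its reversal. *)

theory Defs
  imports Complex_Main "HOL-Library.Sublist"
begin

definition has_period :: "'a list \<Rightarrow> nat \<Rightarrow> bool" where
  "has_period w q \<longleftrightarrow> (\<forall>i. i + q < length w \<longrightarrow> w ! i = w ! (i + q))"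

text \<open>Exponent of a nonempty word: the largest |w|/q over periods 1 <= q <= |w|
  (q = |w| is always a period, giving exponent 1).\<close>

definition word_exp :: "'a list \<Rightarrow> rat" where
  "word_exp w = Max {of_nat (length w) / of_nat q | q. 1 \<le> q \<and> q \<le> length w \<and> has_period w q}"

definition critical_exponent :: "'a list \<Rightarrow> rat" where
  "critical_exponent w = Max {word_exp u | u. sublist u w \<and> u \<noteq> []}"

definition palindrome :: "'a list \<Rightarrow> bool" where
  "palindrome w \<longleftrightarrow> rev w = w"

end

theory Submission
  imports Defs "HOL-Number_Theory.Cong"
begin

text \<open>
  Let h be the 11-uniform morphism on the alphabet {0,1,2,3} with
  h(a) = (g_0 + a, ..., g_10 + a) mod 4, where g = 01312321310. The words h^k(0) are
  palindromes, because g is one, and they are (3/2)^+-free, because h preserves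
  (3/2)^+-freeness: a period of a factor of h(w) that is a multiple of 11 pulls back to a
  period of a factor of w of exponent still above 3/2; any other period q is impossible
  for factors of length at least q + 4, since every length-4 window of h(w) determines its
  position modulo 11; the remaining short factors are checked exhaustively.

  A central factor of odd length of such a palindrome is again a (3/2)^+-free palindrome,
  and its three middle letters have the form aba, a factor of exponent exactly 3/2.
  An injection of {0,1,2,3} into the alphabet transports everything.
\<close>

section \<open>Periods, freeness and the critical exponent\<close>

lemma nth_less_if_set_subset_lessThan:
  "set w \<subseteq> {..<k} \<Longrightarrow> i < length w \<Longrightarrow> w ! i < k"
  by (meson lessThan_iff nth_mem subsetD)

lemma has_period_take_drop_iff:
  assumes "i + n \<le> length w"
  shows "has_period (take n (drop i w)) q \<longleftrightarrow>
    (\<forall>j. j + q < n \<longrightarrow> w ! (i + j) = w ! (i + j + q))"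
  using assms by (auto simp: has_period_def add.assoc)

lemma has_period_take_drop_period:
  assumes "has_period w q" and "q + m \<le> length w"
  shows "take m (drop q w) = take m w"
  using assms by (intro nth_equalityI) (auto simp: has_period_def add.commute)

definition three_halves_plus_free :: "'a list \<Rightarrow> bool" where
  "three_halves_plus_free w \<longleftrightarrow>
     (\<forall>i n q. 0 < q \<and> 3 * q < 2 * n \<and> i + n \<le> length w \<longrightarrow>
        \<not> has_period (take n (drop i w)) q)"

lemma three_halves_plus_free_factorD:
  assumes "three_halves_plus_free w" and "0 < q" and "3 * q < 2 * n" and "i + n \<le> length w"
  shows "\<not> has_period (take n (drop i w)) q"
  using assms by (simp add: three_halves_plus_free_def)

lemma three_halves_plus_free_singleton: "three_halves_plus_free [a]"
  unfolding three_halves_plus_free_def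
proof (intro allI impI notI)
  fix i n q :: nat
  assume "0 < q \<and> 3 * q < 2 * n \<and> i + n \<le> length [a]"
  then show False
    by simp linarith
qed

lemma three_halves_plus_free_sublist:
  assumes "three_halves_plus_free w" and "sublist u w"
  shows "three_halves_plus_free u"
  unfolding three_halves_plus_free_def
proof (intro allI impI)
  fix i n q assume "0 < q \<and> 3 * q < 2 * n \<and> i + n \<le> length u"
  moreover obtain p s where w: "w = p @ u @ s"
    using assms(2) by (auto simp: sublist_def)
  ultimately have "take n (drop i u) = take n (drop (length p + i) w)" "length p + i + n \<le> length w"
    by simp_all
  with three_halves_plus_free_factorD[OF assms(1)] \<open>0 < q \<and> 3 * q < 2 * n \<and> i + n \<le> length u\<close>
  show "\<not> has_period (take n (drop i u)) q"
    by simp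
qed

lemma three_halves_plus_free_period:
  assumes "three_halves_plus_free w" and "has_period w q" and "0 < q"
  shows "2 * length w \<le> 3 * q"
proof (rule ccontr)
  assume "\<not> 2 * length w \<le> 3 * q"
  with three_halves_plus_free_factorD[OF assms(1,3), of "length w" 0] assms(2) show False
    by simp
qed

lemma three_halves_plus_free_nth_Suc:
  assumes "three_halves_plus_free w" and "Suc b < length w"
  shows "w ! b \<noteq> w ! Suc b"
proof
  assume "w ! b = w ! Suc b"
  then have "has_period (take 2 (drop b w)) 1"
    using assms(2) by (simp add: has_period_take_drop_iff)
  with three_halves_plus_free_factorD[OF assms(1), of 1 2 b] assms(2) show False
    by simp
qed

lemma three_halves_plus_free_map:
  assumes "three_halves_plus_free w" and "inj_on f (set w)"
  shows "three_halves_plus_free (map f w)"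
  unfolding three_halves_plus_free_def
proof (intro allI impI notI)
  fix i n q
  assume n: "0 < q \<and> 3 * q < 2 * n \<and> i + n \<le> length (map f w)"
    and "has_period (take n (drop i (map f w))) q"
  then have "has_period (take n (drop i w)) q"
    using assms(2) by (simp add: has_period_take_drop_iff inj_on_eq_iff)
  with three_halves_plus_free_factorD[OF assms(1)] n show False
    by simp
qed

lemma palindrome_nth:
  assumes "palindrome w" and "i < length w"
  shows "w ! (length w - Suc i) = w ! i"
  using assms by (metis palindrome_def rev_nth)

lemma palindrome_map: "palindrome w \<Longrightarrow> palindrome (map f w)"
  by (simp add: palindrome_def rev_map)

lemma palindrome_central_factor:
  assumes "palindrome w" and "length w = 2 * d + l"
  shows "palindrome (take l (drop d w))"
  using assms by (simp add: palindrome_def rev_take rev_drop drop_take)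

lemma finite_word_exp_candidates:
  "finite {of_nat (length u) / of_nat q | q. 1 \<le> q \<and> q \<le> length u \<and> has_period u q}"
  by (rule finite_subset[where B = "(\<lambda>q. of_nat (length u) / of_nat q) ` {1..length u}"]) auto

lemma word_exp_ge:
  assumes "has_period u q" and "1 \<le> q" and "q \<le> length u"
  shows "of_nat (length u) / of_nat q \<le> word_exp u"
  using assms finite_word_exp_candidates[of u] unfolding word_exp_def by (auto intro: Max_ge)

lemma word_exp_leI:
  assumes "u \<noteq> []"
    and "\<And>q. 1 \<le> q \<Longrightarrow> q \<le> length u \<Longrightarrow> has_period u q \<Longrightarrow>
      of_nat (length u) / of_nat q \<le> c"
  shows "word_exp u \<le> c"
proof -
  let ?E = "{of_nat (length u) / of_nat q | q. 1 \<le> q \<and> q \<le> length u \<and> has_period u q} :: rat set"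
  have "has_period u (length u)"
    by (simp add: has_period_def)
  then have "?E \<noteq> {}"
    using assms(1) by (cases u) (auto intro!: exI[of _ "length u"])
  with finite_word_exp_candidates[of u] show ?thesis
    using assms(2) unfolding word_exp_def by (auto simp: Max_le_iff)
qed

lemma finite_nonempty_sublists: "finite {u. sublist u w \<and> u \<noteq> []}"
  by (rule finite_subset[of _ "set (sublists w)"]) auto

lemma word_exp_le_critical_exponent:
  assumes "sublist u w" and "u \<noteq> []"
  shows "word_exp u \<le> critical_exponent w"
  unfolding critical_exponent_def
  using assms finite_nonempty_sublists[of w] by (auto intro!: Max_ge)

lemma critical_exponent_leI:
  assumes "w \<noteq> []" and "\<And>u. sublist u w \<Longrightarrow> u \<noteq> [] \<Longrightarrow> word_exp u \<le> c"
  shows "critical_exponent w \<le> c"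
  unfolding critical_exponent_def
  using assms finite_nonempty_sublists[of w] by (subst Max_le_iff) auto

lemma critical_exponent_le_three_halves:
  assumes "three_halves_plus_free w" and "w \<noteq> []"
  shows "critical_exponent w \<le> 3 / 2"
proof (rule critical_exponent_leI[OF assms(2)])
  fix u assume "sublist u w" "u \<noteq> []"
  then have free: "three_halves_plus_free u"
    using assms(1) three_halves_plus_free_sublist by blast
  show "word_exp u \<le> 3 / 2"
  proof (rule word_exp_leI[OF \<open>u \<noteq> []\<close>])
    fix q assume "1 \<le> q" "has_period u q"
    then have "of_nat (2 * length u) \<le> (of_nat (3 * q) :: rat)"
      using three_halves_plus_free_period[OF free] by (simp only: of_nat_le_iff)
    with \<open>1 \<le> q\<close> show "of_nat (length u) / of_nat q \<le> (3 / 2 :: rat)"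
      by (simp add: divide_le_eq)
  qed
qed

lemma critical_exponent_ge_three_halves:
  assumes "k + 2 < length w" and "w ! k = w ! (k + 2)"
  shows "3 / 2 \<le> critical_exponent w"
proof -
  let ?u = "take 3 (drop k w)"
  have "has_period ?u 2"
    using assms by (auto simp: has_period_take_drop_iff)
  then have "3 / 2 \<le> word_exp ?u"
    using word_exp_ge[of ?u 2] assms(1) by simp
  also have "\<dots> \<le> critical_exponent w"
    using assms(1) by (intro word_exp_le_critical_exponent) (auto intro: sublist_order.order.trans)
  finally show ?thesis .
qed

lemma critical_exponent_odd_palindrome:
  assumes "three_halves_plus_free w" and "palindrome w" and "length w = 2 * c + 1" and "1 \<le> c"
  shows "critical_exponent w = 3 / 2"
proof (rule antisym)
  show "critical_exponent w \<le> 3 / 2"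
    using assms(1,3) by (intro critical_exponent_le_three_halves) auto
  have "w ! (c - 1) = w ! (c + 1)"
    using palindrome_nth[OF assms(2), of "c - 1"] assms(3,4) by (simp add: Suc_diff_le)
  then show "3 / 2 \<le> critical_exponent w"
    using assms(3,4) critical_exponent_ge_three_halves[of "c - 1" w] by simp
qed

section \<open>The morphism h\<close>

definition seed :: "nat list" where
  "seed = [0, 1, 3, 1, 2, 3, 2, 1, 3, 1, 0]"

definition hblock :: "nat \<Rightarrow> nat list" where
  "hblock a = map (\<lambda>c. (c + a) mod 4) seed"

definition hmorph :: "nat list \<Rightarrow> nat list" where
  "hmorph w = concat (map hblock w)"

lemma length_seed [simp]: "length seed = 11"
  by (simp add: seed_def)

lemma length_hblock [simp]: "length (hblock a) = 11"
  by (simp add: hblock_def)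

lemma length_hmorph [simp]: "length (hmorph w) = 11 * length w"
  by (induction w) (simp_all add: hmorph_def)

lemma hmorph_Cons: "hmorph (a # w) = hblock a @ hmorph w"
  by (simp add: hmorph_def)

lemma set_hmorph: "set (hmorph w) \<subseteq> {..<4}"
  by (auto simp: hmorph_def hblock_def)

lemma palindrome_hmorph:
  assumes "palindrome w"
  shows "palindrome (hmorph w)"
proof -
  have "rev (hblock a) = hblock a" for a
    by (simp add: hblock_def seed_def)
  then have "rev (hmorph w) = hmorph (rev w)"
    by (simp add: hmorph_def rev_concat rev_map comp_def)
  with assms show ?thesis
    by (simp add: palindrome_def)
qed

lemma nth_hmorph_block:
  assumes "r < 11" and "b < length w"
  shows "hmorph w ! (11 * b + r) = (seed ! r + w ! b) mod 4"
  using assms(2)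
proof (induction w arbitrary: b)
  case (Cons a w)
  show ?case
  proof (cases b)
    case 0
    with assms(1) show ?thesis
      by (simp add: hmorph_Cons nth_append hblock_def)
  next
    case (Suc b')
    then show ?thesis
      using Cons.IH[of b'] Cons.prems by (simp add: hmorph_Cons nth_append)
  qed
qed simp

lemma hmorph_factor_in_pair_image:
  assumes free: "three_halves_plus_free w" and letters: "set w \<subseteq> {..<4}"
    and i: "i < length (hmorph w)"
  obtains x y where "x < 4" "y < 4" "x \<noteq> y"
    "\<And>m. i mod 11 + m \<le> 22 \<Longrightarrow> i + m \<le> length (hmorph w) \<Longrightarrow>
       take m (drop i (hmorph w)) = take m (drop (i mod 11) (hmorph [x, y]))"
proof
  define b where "b = i div 11"
  define x where "x = w ! b"
  \<comment> \<open>If b is the last block, the factor stays inside it and any letter other than x will do.\<close>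
  define y where "y = (if Suc b < length w then w ! Suc b else (x + 1) mod 4)"
  have b: "b < length w"
    using i by (simp add: b_def div_less_iff_less_mult mult.commute)
  note letter = nth_less_if_set_subset_lessThan[OF letters]
  show x: "x < 4"
    using letter[OF b] by (simp add: x_def)
  show "y < 4"
    using letter by (simp add: y_def)
  show "x \<noteq> y"
    using three_halves_plus_free_nth_Suc[OF free] x by (auto simp: x_def y_def mod_Suc)
  have nth: "hmorph w ! (i + k) = hmorph [x, y] ! (i mod 11 + k)"
    if k: "i mod 11 + k < 22" "i + k < length (hmorph w)" for k
  proof (cases "i mod 11 + k < 11")
    case True
    have i_k: "i + k = 11 * b + (i mod 11 + k)"
      by (simp add: b_def)
    show ?thesis
      unfolding i_k using nth_hmorph_block[OF True b] nth_hmorph_block[OF True, of 0 "[x, y]"]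
      by (simp add: x_def)
  next
    case False
    define s where "s = i mod 11 + k - 11"
    have s: "s < 11" "i + k = 11 * Suc b + s" "i mod 11 + k = 11 * 1 + s"
      using k(1) False by (simp_all add: s_def b_def)
    then have "Suc b < length w"
      using k(2) by simp
    then show ?thesis
      using nth_hmorph_block[OF s(1) \<open>Suc b < length w\<close>] nth_hmorph_block[OF s(1), of 1 "[x, y]"]
      unfolding s(2,3) by (simp add: y_def)
  qed
  show "take m (drop i (hmorph w)) = take m (drop (i mod 11) (hmorph [x, y]))"
    if "i mod 11 + m \<le> 22" "i + m \<le> length (hmorph w)" for m
    using that nth by (intro nth_equalityI) auto
qed

definition diffs :: "nat list \<Rightarrow> int list" where
  "diffs v = map (\<lambda>(a, b). (int b - int a) mod 4) (zip v (tl v))"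

lemma diffs_rotate: "diffs (map (\<lambda>c. (c + x) mod 4) v) = diffs v"
proof -
  have "(int ((b + x) mod 4) - int ((a + x) mod 4)) mod 4 = (int b - int a) mod 4" for a b
    by (simp add: zmod_int mod_diff_eq)
  then show ?thesis
    by (simp add: diffs_def zip_map_map case_prod_beta flip: map_tl)
qed

lemma hmorph_pair_rotate:
  "hmorph [x, (x + d) mod 4] = map (\<lambda>c. (c + x) mod 4) (hmorph [0, d])"
proof -
  have "(c + x) mod 4 = (c mod 4 + x) mod 4" "(c + (x + d) mod 4) mod 4 = ((c + d) mod 4 + x) mod 4" for c
    by (simp_all add: mod_add_right_eq mod_add_left_eq ac_simps)
  then show ?thesis
    by (simp add: hmorph_def hblock_def)
qed

lemma pair_window_diffs_check:
  "list_all (\<lambda>r. list_all (\<lambda>d. list_all (\<lambda>r'. list_all (\<lambda>d'.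
     r = r' \<or> diffs (take 4 (drop r (hmorph [0, d]))) \<noteq> diffs (take 4 (drop r' (hmorph [0, d']))))
   [1..<4]) [0..<11]) [1..<4]) [0..<11]"
  by code_simp

text \<open>
  Differences of consecutive letters modulo 4 are invariant under rotating the alphabet,
  and h(x y) is h(0 d) rotated by x, so synchronisation reduces to the 33 windows of the
  words h(0 d) with d \<noteq> 0.
\<close>

lemma hmorph_pair_window_offset:
  assumes "r < 11" "x < 4" "y < 4" "x \<noteq> y" "r' < 11" "x' < 4" "y' < 4" "x' \<noteq> y'"
    and "take 4 (drop r (hmorph [x, y])) = take 4 (drop r' (hmorph [x', y']))"
  shows "r = r'"
proof -
  define d where "d = (y + 4 - x) mod 4"
  define d' where "d' = (y' + 4 - x') mod 4"
  have y: "y = (x + d) mod 4" and y': "y' = (x' + d') mod 4"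
    using assms(2,3,6,7) by (simp_all add: d_def d'_def mod_add_right_eq)
  then have "d \<noteq> 0" "d' \<noteq> 0"
    using assms(2,4,6,8) by (metis add.right_neutral mod_less)+
  then have "d \<in> set [1..<4]" "d' \<in> set [1..<4]"
    by (auto simp: d_def d'_def)
  moreover have "r \<in> set [0..<11]" "r' \<in> set [0..<11]"
    using assms(1,5) by simp_all
  moreover have "diffs (take 4 (drop r (hmorph [0, d]))) = diffs (take 4 (drop r' (hmorph [0, d'])))"
    using arg_cong[OF assms(9), of diffs]
    by (simp add: y y' hmorph_pair_rotate take_map drop_map diffs_rotate)
  ultimately show ?thesis
    using pair_window_diffs_check unfolding list_all_iff by blast
qed

lemma pair_short_periods_check:
  "list_all (\<lambda>r. list_all (\<lambda>x. list_all (\<lambda>y. list_all (\<lambda>q. list_all (\<lambda>n.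
     x = y \<or> 2 * n \<le> 3 * q \<or>
     \<not> list_all (\<lambda>j. hmorph [x, y] ! (r + j) = hmorph [x, y] ! (r + j + q)) [0..<n - q])
   [0..<q + 4]) [1..<6]) [0..<4]) [0..<4]) [0..<11]"
  by code_simp

lemma hmorph_pair_short_periods:
  assumes "r < 11" "x < 4" "y < 4" "x \<noteq> y" "0 < q" "3 * q < 2 * n" "n < q + 4"
  shows "\<not> has_period (take n (drop r (hmorph [x, y]))) q"
proof -
  have "r \<in> set [0..<11]" "x \<in> set [0..<4]" "y \<in> set [0..<4]"
    "q \<in> set [1..<6]" "n \<in> set [0..<q + 4]"
    using assms by simp_all
  with pair_short_periods_check assms(4,6) obtain j where
    "j \<in> set [0..<n - q]" "hmorph [x, y] ! (r + j) \<noteq> hmorph [x, y] ! (r + j + q)"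
    unfolding list_all_iff by fastforce
  moreover have "r + n \<le> length (hmorph [x, y])"
    using assms(1,6,7) by simp
  ultimately show ?thesis
    by (auto simp: has_period_take_drop_iff less_diff_conv)
qed

lemma hmorph_block_period:
  assumes free: "three_halves_plus_free w" and letters: "set w \<subseteq> {..<4}"
    and p: "0 < p" and n: "3 * (11 * p) < 2 * n" and i: "i + n \<le> length (hmorph w)"
  shows "\<not> has_period (take n (drop i (hmorph w))) (11 * p)"
proof
  assume "has_period (take n (drop i (hmorph w))) (11 * p)"
  then have per: "hmorph w ! (i + j) = hmorph w ! (i + j + 11 * p)" if "j + 11 * p < n" for j
    using i that by (simp add: has_period_take_drop_iff)
  \<comment> \<open>The blocks B1, ..., B2 of w are those whose images meet [i, i + n - 11 p);
    each of them repeats p blocks later.\<close>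
  define B1 where "B1 = i div 11"
  define B2 where "B2 = (i + n - 11 * p - 1) div 11"
  have B1: "11 * B1 \<le> i" "i < 11 * B1 + 11"
    using div_mult_mod_eq[of i 11] mod_less_divisor[of 11 i] unfolding B1_def by linarith+
  have B2: "11 * B2 \<le> i + n - 11 * p - 1" "i + n - 11 * p - 1 < 11 * B2 + 11"
    using div_mult_mod_eq[of "i + n - 11 * p - 1" 11] mod_less_divisor[of 11 "i + n - 11 * p - 1"]
    unfolding B2_def by linarith+
  have periodic: "w ! b = w ! (b + p)" if b: "B1 \<le> b" "b \<le> B2" for b
  proof -
    define s where "s = i - 11 * b"
    have s: "s < 11" "i \<le> 11 * b + s" "11 * b + s + 11 * p < i + n"
      using b B1 B2 n unfolding s_def by linarith+
    then have "hmorph w ! (11 * b + s) = hmorph w ! (11 * (b + p) + s)"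
      using per[of "11 * b + s - i"] by (simp add: algebra_simps)
    moreover have "b + p < length w"
      using s(3) i by simp
    then have "b < length w"
      by simp
    ultimately have "(seed ! s + w ! b) mod 4 = (seed ! s + w ! (b + p)) mod 4"
      using nth_hmorph_block[OF s(1) \<open>b < length w\<close>]
        nth_hmorph_block[OF s(1) \<open>b + p < length w\<close>]
      by simp
    moreover have "w ! b < 4" "w ! (b + p) < 4"
      using nth_less_if_set_subset_lessThan[OF letters] \<open>b < length w\<close> \<open>b + p < length w\<close>
      by blast+
    ultimately show ?thesis
      using cong_add_lcancel_nat[of "seed ! s" "w ! b" "w ! (b + p)" 4] by (simp add: cong_def)
  qed
  have len: "B1 + (B2 - B1 + 1 + p) \<le> length w"
    using B1 B2 n i by simp
  have "B1 \<le> B2"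
    using B1 B2 n by linarith
  have "has_period (take (B2 - B1 + 1 + p) (drop B1 w)) p"
    unfolding has_period_take_drop_iff[OF len]
  proof (intro allI impI)
    fix j assume "j + p < B2 - B1 + 1 + p"
    then show "w ! (B1 + j) = w ! (B1 + j + p)"
      using periodic[of "B1 + j"] \<open>B1 \<le> B2\<close> by simp
  qed
  moreover have "n \<le> 11 * (B2 - B1 + 1 + p)"
    using B1 B2 n \<open>B1 \<le> B2\<close> by (simp add: algebra_simps)
  then have "3 * p < 2 * (B2 - B1 + 1 + p)"
    using n by linarith
  ultimately show False
    using three_halves_plus_free_factorD[OF free p _ len] by blast
qed

lemma three_halves_plus_free_hmorph:
  assumes free: "three_halves_plus_free w" and letters: "set w \<subseteq> {..<4}"
  shows "three_halves_plus_free (hmorph w)"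
  unfolding three_halves_plus_free_def
proof (intro allI impI notI)
  fix i n q
  assume "0 < q \<and> 3 * q < 2 * n \<and> i + n \<le> length (hmorph w)"
  then have q: "0 < q" "3 * q < 2 * n" and i: "i + n \<le> length (hmorph w)"
    by simp_all
  assume per: "has_period (take n (drop i (hmorph w))) q"
  have "i < length (hmorph w)"
    using q i by linarith
  obtain x y where xy: "x < 4" "y < 4" "x \<noteq> y" and at_i:
    "\<And>m. i mod 11 + m \<le> 22 \<Longrightarrow> i + m \<le> length (hmorph w) \<Longrightarrow>
       take m (drop i (hmorph w)) = take m (drop (i mod 11) (hmorph [x, y]))"
    using hmorph_factor_in_pair_image[OF free letters \<open>i < length (hmorph w)\<close>] by blast
  consider (block) p where "q = 11 * p" | (long) "\<not> 11 dvd q" "q + 4 \<le> n" | (short) "n < q + 4"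
    by (metis dvdE not_le)
  then show False
  proof cases
    case block
    then show False
      using hmorph_block_period[OF free letters _ _ i] q per by simp
  next
    case long
    have "i + q < length (hmorph w)"
      using long i by linarith
    then obtain x' y' where xy': "x' < 4" "y' < 4" "x' \<noteq> y'" and at_iq:
      "\<And>m. (i + q) mod 11 + m \<le> 22 \<Longrightarrow> i + q + m \<le> length (hmorph w) \<Longrightarrow>
         take m (drop (i + q) (hmorph w)) = take m (drop ((i + q) mod 11) (hmorph [x', y']))"
      using hmorph_factor_in_pair_image[OF free letters] by blast
    have "take 4 (drop ((i + q) mod 11) (hmorph [x', y'])) = take 4 (drop (i + q) (hmorph w))"
      using at_iq[of 4] long i by simp
    also have "\<dots> = take 4 (drop i (hmorph w))"
      using has_period_take_drop_period[OF per, of 4] long i by (simp add: drop_take add.commute)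
    also have "\<dots> = take 4 (drop (i mod 11) (hmorph [x, y]))"
      using at_i[of 4] long i by simp
    finally have "(i + q) mod 11 = i mod 11"
      by (rule hmorph_pair_window_offset[OF _ xy' _ xy, rotated 2]) simp_all
    with long show False
      using mod_eq_dvd_iff_nat[of i "i + q" 11] by simp
  next
    case short
    have "i mod 11 + n \<le> 22"
      using short q(2) mod_less_divisor[of 11 i] by linarith
    then have "has_period (take n (drop (i mod 11) (hmorph [x, y]))) q"
      using per at_i[of n] i by simp
    then show False
      using hmorph_pair_short_periods[OF _ xy q short] by simp
  qed
qed

section \<open>Palindromes of every odd length\<close>

lemma hmorph_iterate:
  "three_halves_plus_free ((hmorph ^^ k) [0]) \<and> set ((hmorph ^^ k) [0]) \<subseteq> {..<4} \<and>
   palindrome ((hmorph ^^ k) [0]) \<and> length ((hmorph ^^ k) [0]) = 11 ^ k"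
proof (induction k)
  case 0
  show ?case
    using three_halves_plus_free_singleton by (simp add: palindrome_def)
next
  case (Suc k)
  then show ?case
    using three_halves_plus_free_hmorph set_hmorph palindrome_hmorph by simp
qed

lemma three_halves_plus_free_palindrome_exists:
  assumes "odd l"
  obtains u :: "nat list"
  where "set u \<subseteq> {..<4}" "length u = l" "palindrome u" "three_halves_plus_free u"
proof
  define W where "W = (hmorph ^^ l) [0]"
  define d where "d = (11 ^ l - l) div 2"
  have W: "three_halves_plus_free W" "set W \<subseteq> {..<4}" "palindrome W" "length W = 11 ^ l"
    using hmorph_iterate[of l] unfolding W_def by simp_all
  have "(2::nat) ^ l \<le> 11 ^ l"
    by (rule power_mono) simp_all
  then have "l < 11 ^ l"
    using less_exp[of l] by linarith
  then have "even (11 ^ l - l)"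
    using assms by simp
  then have len: "length W = 2 * d + l"
    using \<open>l < 11 ^ l\<close> W(4) by (simp add: d_def)
  show "set (take l (drop d W)) \<subseteq> {..<4}"
    using W(2) by (meson in_set_dropD in_set_takeD subset_iff)
  show "length (take l (drop d W)) = l"
    using len by simp
  show "palindrome (take l (drop d W))"
    using palindrome_central_factor[OF W(3) len] .
  show "three_halves_plus_free (take l (drop d W))"
    using three_halves_plus_free_sublist[OF W(1)] by (meson sublist_drop sublist_take sublist_order.order.trans)
qed

theorem mainTheorem7:
  fixes \<Sigma> :: "'a set" and l :: nat
  assumes "finite \<Sigma>" and "card \<Sigma> \<ge> 4" and "odd l" and "l \<ge> 3"
  shows "\<exists>w. set w \<subseteq> \<Sigma> \<and> length w = l \<and> palindrome w \<and> critical_exponent w = 3/2"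
proof -
  obtain f where f: "f ` {..<4::nat} \<subseteq> \<Sigma>" "inj_on f {..<4::nat}"
    using card_le_inj[of "{..<4::nat}" \<Sigma>] assms(1,2) by auto
  obtain u :: "nat list"
    where u: "set u \<subseteq> {..<4}" "length u = l" "palindrome u" "three_halves_plus_free u"
    using three_halves_plus_free_palindrome_exists[OF assms(3)] by blast
  obtain c where c: "l = 2 * c + 1"
    using assms(3) by (rule oddE)
  with assms(4) have "1 \<le> c"
    by linarith
  have "length (map f u) = 2 * c + 1"
    using u(2) c by simp
  then have "critical_exponent (map f u) = 3 / 2"
    using critical_exponent_odd_palindrome three_halves_plus_free_map[OF u(4) inj_on_subset[OF f(2) u(1)]]
      palindrome_map[OF u(3)] \<open>1 \<le> c\<close> by blast
  moreover have "set (map f u) \<subseteq> \<Sigma>"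
    using u(1) f(1) by auto
  ultimately show ?thesis
    using u(2) palindrome_map[OF u(3)] by (intro exI[of _ "map f u"]) simp
qed

end
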